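(* Let $k\ge 3$ and $n>3$. Protocol 3 (Cross-edges Tree), run on $n$ nodes with one node initially in $L_0$ and the others in $F$, never stabilises with isolated nodes: in every stable configuration reached by a fair execution, every node belongs to the leader's connected component (in particular no node remains in state $F$).
   Context: Network constructor model: $n$ nodes, every pair may interact; node states from a finite set; each node pair has an edge state in $\{0,1\}$, initially $0$. At each step a pair of nodes is selected and updated according to the transition rules (either ordering of the pair); unlisted triples are unchanged. A configuration is stable if no listed rule is applicable to any pair of nodes. An infinite execution is fair if whenever a configuration $C$ occurs infinitely often, every configuration reachable from $C$ in one step occurs infinitely often. Protocol 3 (Cross-edges Tree), for a parameter $k$: $Q=\{F,L_0,\dots,L_k,O_0,\dots,O_k\}$, rules $(L_x,F,0)\to(L_{x+1},O_0,1)$ for $x<k$; $(O_y,F,0)\to(O_{y+1},O_0,1)$ for $y<k$; $(L_x,O_y,0)\to(L_{x+1},O_{y+1},1)$ for $x,y<k-1$; $(O_y,O_z,0)\to(O_{y+1},O_{z+1},1)$ for $y,z<k-1$. *)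

theory Defs
  imports Main
begin

text \<open>Node states of Protocol 3 (Cross-edges Tree). The counters are bounded by k
  through the guards of the rules (all reachable states have index at most k).\<close>
datatype st = SF | SL nat | SO nat

text \<open>Configurations on nodes 0..n-1: node states and (symmetric) edge states.\<close>
type_synonym config = "(nat \<Rightarrow> st) \<times> (nat \<Rightarrow> nat \<Rightarrow> bool)"

fun delta :: "nat \<Rightarrow> st \<Rightarrow> st \<Rightarrow> bool \<Rightarrow> (st \<times> st \<times> bool) option" where
  "delta k (SL x) SF False = (if x < k then Some (SL (x+1), SO 0, True) else None)"
| "delta k (SO y) SF False = (if y < k then Some (SO (y+1), SO 0, True) else None)"
| "delta k (SL x) (SO y) False =
     (if x < k - 1 \<and> y < k - 1 then Some (SL (x+1), SO (y+1), True) else None)"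
| "delta k (SO y) (SO z) False =
     (if y < k - 1 \<and> z < k - 1 then Some (SO (y+1), SO (z+1), True) else None)"
| "delta k _ _ _ = None"

definition upd :: "config \<Rightarrow> nat \<Rightarrow> nat \<Rightarrow> st \<Rightarrow> st \<Rightarrow> bool \<Rightarrow> config" where
  "upd C u v a b c =
     ((fst C)(u := a, v := b),
      (snd C)(u := (snd C u)(v := c), v := (snd C v)(u := c)))"

definition interact :: "nat \<Rightarrow> config \<Rightarrow> nat \<Rightarrow> nat \<Rightarrow> config" where
  "interact k C u v =
     (case delta k (fst C u) (fst C v) (snd C u v) of
        Some (a, b, c) \<Rightarrow> upd C u v a b c
      | None \<Rightarrow> (case delta k (fst C v) (fst C u) (snd C u v) of
                  Some (a, b, c) \<Rightarrow> upd C v u a b c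
                | None \<Rightarrow> C))"

definition step :: "nat \<Rightarrow> nat \<Rightarrow> config \<Rightarrow> config \<Rightarrow> bool" where
  "step k n C C' \<longleftrightarrow> (\<exists>u<n. \<exists>v<n. u \<noteq> v \<and> C' = interact k C u v)"

definition applicable :: "nat \<Rightarrow> config \<Rightarrow> nat \<Rightarrow> nat \<Rightarrow> bool" where
  "applicable k C u v \<longleftrightarrow> delta k (fst C u) (fst C v) (snd C u v) \<noteq> None"

definition stable :: "nat \<Rightarrow> nat \<Rightarrow> config \<Rightarrow> bool" where
  "stable k n C \<longleftrightarrow> (\<forall>u<n. \<forall>v<n. u \<noteq> v \<longrightarrow> \<not> applicable k C u v)"

definition init :: config where
  "init = ((\<lambda>i. if i = 0 then SL 0 else SF), (\<lambda>_ _. False))"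

definition fair_exec :: "nat \<Rightarrow> nat \<Rightarrow> (nat \<Rightarrow> config) \<Rightarrow> bool" where
  "fair_exec k n X \<longleftrightarrow>
     X 0 = init \<and>
     (\<forall>i. step k n (X i) (X (Suc i))) \<and>
     (\<forall>C. infinite {i. X i = C} \<longrightarrow>
          (\<forall>C'. step k n C C' \<longrightarrow> infinite {i. X i = C'}))"

definition active_edges :: "nat \<Rightarrow> config \<Rightarrow> (nat \<times> nat) set" where
  "active_edges n C = {(a, b). a < n \<and> b < n \<and> snd C a b}"

definition is_leader_state :: "st \<Rightarrow> bool" where
  "is_leader_state q \<longleftrightarrow> (\<exists>x. q = SL x)"

end

theory Submission
  imports Defs
begin

text \<open>Every reachable configuration satisfies an invariant: node 0 is the leader, active
  edges join only recruited (non-F) nodes, every recruited node is joined to node 0 by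
  active edges, and some node can still recruit, because the node just recruited or
  incremented in any rule ends with a counter below k. In a stable configuration that node
  could recruit any remaining F node, so none is left.\<close>

definition can_recruit :: "nat \<Rightarrow> st \<Rightarrow> bool" where
  "can_recruit k q \<longleftrightarrow> delta k q SF False \<noteq> None"

lemma can_recruit_simps [simp]:
  "\<not> can_recruit k SF"
  "can_recruit k (SL x) \<longleftrightarrow> x < k"
  "can_recruit k (SO y) \<longleftrightarrow> y < k"
  by (auto simp: can_recruit_def)

lemma delta_SomeD:
  assumes "delta k a b e = Some (a', b', c)"
  shows "c" "a \<noteq> SF" "a' \<noteq> SF" "b' \<noteq> SF" "can_recruit k b'"
    "is_leader_state a' \<longleftrightarrow> is_leader_state a" "\<not> is_leader_state b"
  using assms
  by (cases "(k, a, b, e)" rule: delta.cases; auto simp: is_leader_state_def split: if_splits)+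

definition tree_inv :: "nat \<Rightarrow> nat \<Rightarrow> config \<Rightarrow> bool" where
  "tree_inv k n C \<longleftrightarrow> is_leader_state (fst C 0) \<and>
     (\<forall>a b. snd C a b \<longrightarrow> fst C a \<noteq> SF \<and> fst C b \<noteq> SF) \<and>
     (\<forall>v<n. fst C v \<noteq> SF \<longrightarrow> (0, v) \<in> (active_edges n C)\<^sup>*) \<and>
     (\<exists>w<n. can_recruit k (fst C w))"

lemma tree_inv_init: "0 < k \<Longrightarrow> 0 < n \<Longrightarrow> tree_inv k n init"
  unfolding tree_inv_def init_def is_leader_state_def by auto

lemma tree_inv_upd:
  assumes inv: "tree_inv k n C" and ab: "a < n" "b < n" "a \<noteq> b"
    and d: "delta k (fst C a) (fst C b) e = Some (a', b', c)"
  shows "tree_inv k n (upd C a b a' b' c)"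
proof -
  let ?C = "upd C a b a' b' c"
  note D = delta_SomeD[OF d]
  have states: "fst ?C = (fst C)(a := a', b := b')"
    by (simp add: upd_def)
  have edges: "snd ?C x y \<longleftrightarrow> {x, y} = {a, b} \<or> snd C x y" for x y
    using ab(3) D(1) by (auto simp: upd_def doubleton_eq_iff)
  have reach_mono: "(active_edges n C)\<^sup>* \<subseteq> (active_edges n ?C)\<^sup>*"
    by (rule rtrancl_mono) (auto simp: active_edges_def edges)
  from inv have leader: "is_leader_state (fst C 0)"
    and free_isolated: "\<forall>x y. snd C x y \<longrightarrow> fst C x \<noteq> SF \<and> fst C y \<noteq> SF"
    and reach: "\<forall>v<n. fst C v \<noteq> SF \<longrightarrow> (0, v) \<in> (active_edges n C)\<^sup>*"
    unfolding tree_inv_def by auto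
  have reach_a: "(0, a) \<in> (active_edges n ?C)\<^sup>*"
    using reach D(2) ab(1) reach_mono by auto
  have reach_b: "(0, b) \<in> (active_edges n ?C)\<^sup>*"
    using reach_a ab by (auto simp: active_edges_def edges intro: rtrancl_into_rtrancl)
  have "is_leader_state (fst ?C 0)"
    using leader D ab states by auto
  moreover have "fst ?C x \<noteq> SF \<and> fst ?C y \<noteq> SF" if "snd ?C x y" for x y
    using that edges[of x y] free_isolated D(2-4) states by (auto simp: doubleton_eq_iff)
  moreover have "\<forall>v<n. fst ?C v \<noteq> SF \<longrightarrow> (0, v) \<in> (active_edges n ?C)\<^sup>*"
    using reach reach_mono reach_a reach_b states by auto
  moreover have "can_recruit k (fst ?C b)"
    using D states by simp
  ultimately show ?thesis
    unfolding tree_inv_def using ab(2) by blast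
qed

lemma tree_inv_step:
  assumes inv: "tree_inv k n C" and "step k n C C'"
  shows "tree_inv k n C'"
proof -
  obtain u v where uv: "u < n" "v < n" "u \<noteq> v" and C': "C' = interact k C u v"
    using assms(2) unfolding step_def by blast
  show ?thesis
  proof (cases "delta k (fst C u) (fst C v) (snd C u v)")
    case (Some r)
    then show ?thesis
      using tree_inv_upd[OF inv uv] by (cases r) (simp add: C' interact_def)
  next
    case None
    then show ?thesis
      using tree_inv_upd[OF inv uv(2,1) uv(3)[symmetric]] inv
      by (cases "delta k (fst C v) (fst C u) (snd C u v)")
        (auto simp: C' interact_def split: prod.splits)
  qed
qed

lemma fair_exec_tree_inv:
  assumes "fair_exec k n X" "0 < k" "0 < n"
  shows "tree_inv k n (X j)"
  using assms
  by (induction j) (auto simp: fair_exec_def intro: tree_inv_init tree_inv_step)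

lemma stable_tree_inv_no_free:
  assumes "stable k n C" "tree_inv k n C" "v < n"
  shows "fst C v \<noteq> SF"
proof
  assume free: "fst C v = SF"
  obtain w where w: "w < n" "can_recruit k (fst C w)"
    using assms(2) unfolding tree_inv_def by blast
  with free have "w \<noteq> v" by auto
  from assms(2) free have "\<not> snd C w v"
    unfolding tree_inv_def by blast
  with w(2) free have "applicable k C w v"
    by (simp add: applicable_def can_recruit_def)
  with assms(1,3) w(1) \<open>w \<noteq> v\<close> show False
    unfolding stable_def by blast
qed

theorem corollary1:
  fixes k n :: nat and X :: "nat \<Rightarrow> config" and i :: nat
  assumes "k \<ge> 3" and "n > 3"
    and "fair_exec k n X"
    and "stable k n (X i)"
  shows "is_leader_state (fst (X i) 0) \<and>
         (\<forall>v<n. (0, v) \<in> (active_edges n (X i))\<^sup>* \<and> fst (X i) v \<noteq> SF)"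
proof -
  have inv: "tree_inv k n (X i)"
    using fair_exec_tree_inv assms(1-3) by simp
  then have "\<forall>v<n. fst (X i) v \<noteq> SF"
    using stable_tree_inv_no_free assms(4) by blast
  with inv show ?thesis
    unfolding tree_inv_def by blast
qed

end
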